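(* Let $X$ be a Banach space with dual $X^{\ast}$ and $X_d$ a sequence space as described in the context. Let $\{x_n\}\subset X$ be a co-frame and $\{y_n\}\subset X^{\ast}$ a frame. Then $\{y_n\}$ is equivalent to some alternate dual frame for $\{x_n\}$ if and only if the operator $$Vy=\sum_{n=1}^\infty (x_n,y)\,y_n$$ is invertible as an operator from $X^{\ast}$ to $X^{\ast}$.
   Context: $X$ is a Banach space, $X^{\ast}$ its dual, and $(x,y)$ denotes the value of $y\in X^{\ast}$ at $x\in X$. $X_d$ is a Banach space of scalar sequences $a=\{a_n\}$ in which the unit vectors $\varepsilon_n=\{\delta_{nj}\}_j$ form a basis; its dual $X_d^{\ast}$ is identified with a space of sequences via $b\mapsto\{b(\varepsilon_n)\}$, and it is assumed that the coordinate functionals $\{\varepsilon_n^{\ast}\}$ form a basis of $X_d^{\ast}$. A sequence $\{y_n\}\subset X^{\ast}$ is a frame if there are $A,B>0$ such that $\{(x,y_n)\}\in X_d$ and $A\|x\|_X\le \|\{(x,y_n)\}\|_{X_d}\le B\|x\|_X$ for all $x\in X$. A sequence $\{x_n\}\subset X$ is a co-frame if $\{(x_n,y)\}\in X_d^{\ast}$ for all $y\in X^{\ast}$ and there are $\tilde A,\tilde B>0$ with $\tilde A\|y\|_{X^{\ast}}\le \|\{(x_n,y)\}\|_{X_d^{\ast}}\le \tilde B\|y\|_{X^{\ast}}$ for all $y\in X^{\ast}$. A co-frame $\{x_n\}$ and a frame $\{y_n\}$ form a cross-frame if $x=\sum_n (x,y_n)x_n$ for all $x\in X$ and $y=\sum_n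 (x_n,y)y_n$ for all $y\in X^{\ast}$. A sequence $\{w_n\}\subset X^{\ast}$ is an alternate dual frame for the co-frame $\{x_n\}$ if $\{x_n\}$ and $\{w_n\}$ form a cross-frame. Two sequences $\{y_n\},\{w_n\}\subset X^{\ast}$ are equivalent if there is an invertible bounded linear operator $T:X^{\ast}\to X^{\ast}$ with $Ty_n=w_n$ for all $n$. *)

theory Defs
  imports "HOL-Analysis.Analysis"
begin

(* Scalars are real.  X is a type 'a :: banach, X* is 'a \<Rightarrow>\<^sub>L real,
   and the pairing (x,y) is blinfun_apply y x.
   The sequence space X_d is a set D of real sequences with a norm nd. *)

definition unitv :: "nat \<Rightarrow> nat \<Rightarrow> real" where
  "unitv n = (\<lambda>j. if j = n then 1 else 0)"

definition psum :: "(nat \<Rightarrow> real) \<Rightarrow> nat \<Rightarrow> nat \<Rightarrow> real" where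
  "psum c N = (\<lambda>j. \<Sum>n<N. c n * unitv n j)"

definition seq_space :: "(nat \<Rightarrow> real) set \<Rightarrow> ((nat \<Rightarrow> real) \<Rightarrow> real) \<Rightarrow> bool" where
  "seq_space D nd \<longleftrightarrow>
     (\<lambda>j. 0) \<in> D \<and>
     (\<forall>a\<in>D. \<forall>b\<in>D. (\<lambda>j. a j + b j) \<in> D) \<and>
     (\<forall>c. \<forall>a\<in>D. (\<lambda>j. c * a j) \<in> D) \<and>
     (\<forall>a\<in>D. 0 \<le> nd a) \<and>
     (\<forall>a\<in>D. nd a = 0 \<longleftrightarrow> a = (\<lambda>j. 0)) \<and>
     (\<forall>c. \<forall>a\<in>D. nd (\<lambda>j. c * a j) = \<bar>c\<bar> * nd a) \<and>
     (\<forall>a\<in>D. \<forall>b\<in>D. nd (\<lambda>j. a j + b j) \<le> nd a + nd b) \<and>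
     (\<forall>f. (\<forall>n. f n \<in> D) \<and> (\<forall>e>0. \<exists>N. \<forall>m\<ge>N. \<forall>n\<ge>N. nd (\<lambda>j. f m j - f n j) < e)
          \<longrightarrow> (\<exists>a\<in>D. (\<lambda>n. nd (\<lambda>j. f n j - a j)) \<longlonglongrightarrow> 0))"

definition seq_basis :: "(nat \<Rightarrow> real) set \<Rightarrow> ((nat \<Rightarrow> real) \<Rightarrow> real) \<Rightarrow> bool" where
  "seq_basis D nd \<longleftrightarrow>
     (\<forall>n. unitv n \<in> D) \<and>
     (\<forall>a\<in>D. (\<lambda>N. nd (\<lambda>j. a j - psum a N j)) \<longlonglongrightarrow> 0) \<and>
     (\<forall>a\<in>D. \<forall>c. (\<lambda>N. nd (\<lambda>j. a j - psum c N j)) \<longlonglongrightarrow> 0 \<longrightarrow> c = a)"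

definition dual_rep :: "(nat \<Rightarrow> real) set \<Rightarrow> ((nat \<Rightarrow> real) \<Rightarrow> real) \<Rightarrow> (nat \<Rightarrow> real)
                        \<Rightarrow> ((nat \<Rightarrow> real) \<Rightarrow> real) \<Rightarrow> bool" where
  "dual_rep D nd \<beta> b \<longleftrightarrow>
     (\<forall>a\<in>D. \<forall>a'\<in>D. b (\<lambda>j. a j + a' j) = b a + b a') \<and>
     (\<forall>c. \<forall>a\<in>D. b (\<lambda>j. c * a j) = c * b a) \<and>
     (\<exists>K. \<forall>a\<in>D. \<bar>b a\<bar> \<le> K * nd a) \<and>
     (\<forall>n. b (unitv n) = \<beta> n)"

(* \<beta> \<in> X_d^* (under the identification b \<mapsto> {b(\<epsilon>_n)}) *)
definition in_dual :: "(nat \<Rightarrow> real) set \<Rightarrow> ((nat \<Rightarrow> real) \<Rightarrow> real) \<Rightarrow> (nat \<Rightarrow> real) \<Rightarrow> bool" where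
  "in_dual D nd \<beta> \<longleftrightarrow> (\<exists>b. dual_rep D nd \<beta> b)"

definition dual_opnorm :: "(nat \<Rightarrow> real) set \<Rightarrow> ((nat \<Rightarrow> real) \<Rightarrow> real) \<Rightarrow> ((nat \<Rightarrow> real) \<Rightarrow> real) \<Rightarrow> real" where
  "dual_opnorm D nd b = Sup {\<bar>b a\<bar> | a. a \<in> D \<and> nd a \<le> 1}"

definition dual_norm :: "(nat \<Rightarrow> real) set \<Rightarrow> ((nat \<Rightarrow> real) \<Rightarrow> real) \<Rightarrow> (nat \<Rightarrow> real) \<Rightarrow> real" where
  "dual_norm D nd \<beta> = dual_opnorm D nd (SOME b. dual_rep D nd \<beta> b)"

definition dual_basis :: "(nat \<Rightarrow> real) set \<Rightarrow> ((nat \<Rightarrow> real) \<Rightarrow> real) \<Rightarrow> bool" where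
  "dual_basis D nd \<longleftrightarrow>
     (\<forall>n. in_dual D nd (unitv n)) \<and>
     (\<forall>\<beta>. in_dual D nd \<beta> \<longrightarrow> (\<lambda>N. dual_norm D nd (\<lambda>j. \<beta> j - psum \<beta> N j)) \<longlonglongrightarrow> 0)"

definition frame :: "(nat \<Rightarrow> real) set \<Rightarrow> ((nat \<Rightarrow> real) \<Rightarrow> real) \<Rightarrow> (nat \<Rightarrow> ('a::banach \<Rightarrow>\<^sub>L real)) \<Rightarrow> bool" where
  "frame D nd ys \<longleftrightarrow>
     (\<exists>A B. A > 0 \<and> B > 0 \<and>
        (\<forall>x. (\<lambda>n. blinfun_apply (ys n) x) \<in> D \<and>
             A * norm x \<le> nd (\<lambda>n. blinfun_apply (ys n) x) \<and>
             nd (\<lambda>n. blinfun_apply (ys n) x) \<le> B * norm x))"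

definition coframe :: "(nat \<Rightarrow> real) set \<Rightarrow> ((nat \<Rightarrow> real) \<Rightarrow> real) \<Rightarrow> (nat \<Rightarrow> 'a::banach) \<Rightarrow> bool" where
  "coframe D nd xs \<longleftrightarrow>
     (\<exists>A B. A > 0 \<and> B > 0 \<and>
        (\<forall>y::'a \<Rightarrow>\<^sub>L real. in_dual D nd (\<lambda>n. blinfun_apply y (xs n)) \<and>
             A * norm y \<le> dual_norm D nd (\<lambda>n. blinfun_apply y (xs n)) \<and>
             dual_norm D nd (\<lambda>n. blinfun_apply y (xs n)) \<le> B * norm y))"

definition cross_frame :: "(nat \<Rightarrow> real) set \<Rightarrow> ((nat \<Rightarrow> real) \<Rightarrow> real) \<Rightarrow> (nat \<Rightarrow> 'a::banach)
                           \<Rightarrow> (nat \<Rightarrow> ('a \<Rightarrow>\<^sub>L real)) \<Rightarrow> bool" where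
  "cross_frame D nd xs ys \<longleftrightarrow>
     coframe D nd xs \<and> frame D nd ys \<and>
     (\<forall>x. (\<lambda>n. blinfun_apply (ys n) x *\<^sub>R xs n) sums x) \<and>
     (\<forall>y. (\<lambda>n. blinfun_apply y (xs n) *\<^sub>R ys n) sums y)"

definition alt_dual_frame :: "(nat \<Rightarrow> real) set \<Rightarrow> ((nat \<Rightarrow> real) \<Rightarrow> real) \<Rightarrow> (nat \<Rightarrow> 'a::banach)
                              \<Rightarrow> (nat \<Rightarrow> ('a \<Rightarrow>\<^sub>L real)) \<Rightarrow> bool" where
  "alt_dual_frame D nd xs ws \<longleftrightarrow> cross_frame D nd xs ws"

definition equiv_seq :: "(nat \<Rightarrow> ('a::banach \<Rightarrow>\<^sub>L real)) \<Rightarrow> (nat \<Rightarrow> ('a \<Rightarrow>\<^sub>L real)) \<Rightarrow> bool" where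
  "equiv_seq ys ws \<longleftrightarrow>
     (\<exists>T S :: ('a \<Rightarrow>\<^sub>L real) \<Rightarrow>\<^sub>L ('a \<Rightarrow>\<^sub>L real).
        (\<forall>y. blinfun_apply S (blinfun_apply T y) = y \<and> blinfun_apply T (blinfun_apply S y) = y) \<and>
        (\<forall>n. blinfun_apply T (ys n) = ws n))"

end

theory Submission
  imports Defs
begin

text \<open>
  Let \<open>S x = \<Sum>n. (x, y\<^sub>n) x\<^sub>n\<close>.  The series converges because \<open>((x, y\<^sub>n))\<^sub>n \<in> X\<^sub>d\<close> and the
  co-frame bound controls the tails of \<open>\<Sum> a\<^sub>n x\<^sub>n\<close> by the tails of \<open>a\<close> in \<open>X\<^sub>d\<close>; dually
  \<open>V y = \<Sum>n. (x\<^sub>n, y) y\<^sub>n\<close> converges because \<open>{\<epsilon>\<^sub>n\<^sup>*}\<close> is a basis of \<open>X\<^sub>d\<^sup>*\<close>, and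
  \<open>V\<close> is the adjoint of \<open>S\<close>.

  If \<open>T y\<^sub>n = w\<^sub>n\<close> for an alternate dual frame \<open>(w\<^sub>n)\<close>, applying \<open>T\<^sup>-\<^sup>1\<close> to
  \<open>y = \<Sum>n. (x\<^sub>n, y) w\<^sub>n\<close> gives \<open>V = T\<^sup>-\<^sup>1\<close>.  Conversely, if \<open>V\<close> is invertible, norming
  functionals show that \<open>S\<close> is bounded below, and a functional annihilating the range of
  \<open>S\<close> is killed by \<open>V\<close>, so the (closed) range is everything by Hahn--Banach.  Then
  \<open>w\<^sub>n = V\<^sup>-\<^sup>1 y\<^sub>n\<close> satisfies \<open>(x, w\<^sub>n) = (S\<^sup>-\<^sup>1 x, y\<^sub>n)\<close>, which makes it a frame that is
  dual to \<open>(x\<^sub>n)\<close> and equivalent to \<open>(y\<^sub>n)\<close>.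

  Hahn--Banach itself is derived from Zorn's lemma: a sublinear functional that is minimal
  below a given one is linear.
\<close>

section \<open>Hahn--Banach via minimal sublinear functionals\<close>

definition sublinear :: "('a::real_vector \<Rightarrow> real) \<Rightarrow> bool" where
  "sublinear q \<longleftrightarrow>
    (\<forall>u v. q (u + v) \<le> q u + q v) \<and> (\<forall>c v. c \<ge> 0 \<longrightarrow> q (c *\<^sub>R v) = c * q v)"

lemma sublinear_add: "sublinear q \<Longrightarrow> q (u + v) \<le> q u + q v"
  by (simp add: sublinear_def)

lemma sublinear_scaleR: "sublinear q \<Longrightarrow> c \<ge> 0 \<Longrightarrow> q (c *\<^sub>R v) = c * q v"
  by (simp add: sublinear_def)

lemma sublinear_0: "sublinear q \<Longrightarrow> q 0 = 0"
  using sublinear_scaleR[of q 0 0] by simp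

lemma sublinear_minus_le: "sublinear q \<Longrightarrow> - q (- v) \<le> q v"
  using sublinear_add[of q v "- v"] sublinear_0[of q] by simp

text \<open>For positive homogeneity it suffices to prove \<open>q (c *\<^sub>R v) \<le> c * q v\<close>:
  applied with \<open>1 / c\<close> it gives the converse.\<close>
lemma sublinearI:
  fixes q :: "'a::real_vector \<Rightarrow> real"
  assumes add: "\<And>u v. q (u + v) \<le> q u + q v"
    and scale: "\<And>c v. c > 0 \<Longrightarrow> q (c *\<^sub>R v) \<le> c * q v"
    and zero: "q 0 = 0"
  shows "sublinear q"
proof -
  have "q (c *\<^sub>R v) = c * q v" if "c > 0" for c v
  proof (rule antisym)
    have "q v \<le> (1 / c) * q (c *\<^sub>R v)"
      using scale[of "1 / c" "c *\<^sub>R v"] that by simp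
    then show "c * q v \<le> q (c *\<^sub>R v)" using that by (simp add: field_simps)
  qed (use scale that in simp)
  then show ?thesis
    unfolding sublinear_def using add zero by (metis less_eq_real_def mult_zero_left scaleR_zero_left)
qed

text \<open>The key device of the Hahn--Banach argument: \<open>sublinear_reduce q a\<close> is a
  sublinear functional below \<open>q\<close> with value at most \<open>- q a\<close> at \<open>- a\<close>.  Hence a
  sublinear functional minimal below some \<open>q\<^sub>0\<close> is odd, i.e.\ linear.\<close>
definition sublinear_reduce :: "('a::real_vector \<Rightarrow> real) \<Rightarrow> 'a \<Rightarrow> 'a \<Rightarrow> real" where
  "sublinear_reduce q a v = Inf ((\<lambda>t. q (v + t *\<^sub>R a) - t * q a) ` {0..})"

lemma sublinear_reduce_term_lower:
  assumes "sublinear q" "t \<ge> 0"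
  shows "- q (- v) \<le> q (v + t *\<^sub>R a) - t * q a"
proof -
  have "q (t *\<^sub>R a) \<le> q (v + t *\<^sub>R a) + q (- v)"
    using sublinear_add[OF assms(1), of "v + t *\<^sub>R a" "- v"] by simp
  then show ?thesis using sublinear_scaleR[OF assms] by simp
qed

lemma sublinear_reduce_le:
  assumes "sublinear q" "t \<ge> 0"
  shows "sublinear_reduce q a v \<le> q (v + t *\<^sub>R a) - t * q a"
  unfolding sublinear_reduce_def
proof (rule cInf_lower)
  show "bdd_below ((\<lambda>t. q (v + t *\<^sub>R a) - t * q a) ` {0..})"
    by (rule bdd_belowI2[where m = "- q (- v)"]) (use sublinear_reduce_term_lower assms(1) in auto)
qed (use assms(2) in auto)

lemma sublinear_reduce_greatest:
  "(\<And>t. t \<ge> 0 \<Longrightarrow> m \<le> q (v + t *\<^sub>R a) - t * q a) \<Longrightarrow> m \<le> sublinear_reduce q a v"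
  unfolding sublinear_reduce_def by (rule cInf_greatest) auto

lemma sublinear_reduce_le_self: "sublinear q \<Longrightarrow> sublinear_reduce q a v \<le> q v"
  using sublinear_reduce_le[of q 0 a v] by simp

lemma sublinear_reduce_minus: "sublinear q \<Longrightarrow> sublinear_reduce q a (- a) \<le> - q a"
  using sublinear_reduce_le[of q 1 a "- a"] sublinear_0[of q] by simp

lemma sublinear_sublinear_reduce:
  assumes q: "sublinear q"
  shows "sublinear (sublinear_reduce q a)"
proof (rule sublinearI)
  fix u v
  have "sublinear_reduce q a (u + v) - (q (v + t *\<^sub>R a) - t * q a) \<le> sublinear_reduce q a u"
    if t: "t \<ge> 0" for t
  proof (rule sublinear_reduce_greatest)
    fix s :: real assume s: "s \<ge> 0"
    have "sublinear_reduce q a (u + v) \<le> q ((u + s *\<^sub>R a) + (v + t *\<^sub>R a)) - (s + t) * q a"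
      using sublinear_reduce_le[OF q, of "s + t" a "u + v"] s t by (simp add: algebra_simps)
    also have "\<dots> \<le> q (u + s *\<^sub>R a) + q (v + t *\<^sub>R a) - (s + t) * q a"
      using sublinear_add[OF q] by simp
    finally show "sublinear_reduce q a (u + v) - (q (v + t *\<^sub>R a) - t * q a)
        \<le> q (u + s *\<^sub>R a) - s * q a"
      by (simp add: algebra_simps)
  qed
  then have "sublinear_reduce q a (u + v) - sublinear_reduce q a u \<le> sublinear_reduce q a v"
    by (intro sublinear_reduce_greatest) force
  then show "sublinear_reduce q a (u + v) \<le> sublinear_reduce q a u + sublinear_reduce q a v"
    by simp
next
  fix c :: real and v assume c: "c > 0"
  have "sublinear_reduce q a (c *\<^sub>R v) / c \<le> sublinear_reduce q a v"
  proof (rule sublinear_reduce_greatest)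
    fix s :: real assume s: "s \<ge> 0"
    have "sublinear_reduce q a (c *\<^sub>R v) \<le> q (c *\<^sub>R (v + s *\<^sub>R a)) - (c * s) * q a"
      using sublinear_reduce_le[OF q, of "c * s" a "c *\<^sub>R v"] s c by (simp add: algebra_simps)
    also have "\<dots> = c * (q (v + s *\<^sub>R a) - s * q a)"
      using sublinear_scaleR[OF q, of c "v + s *\<^sub>R a"] c by (simp add: algebra_simps)
    finally show "sublinear_reduce q a (c *\<^sub>R v) / c \<le> q (v + s *\<^sub>R a) - s * q a"
      using c by (simp add: field_simps)
  qed
  then show "sublinear_reduce q a (c *\<^sub>R v) \<le> c * sublinear_reduce q a v"
    using c by (simp add: field_simps)
next
  show "sublinear_reduce q a 0 = 0"
  proof (rule antisym)
    show "sublinear_reduce q a 0 \<le> 0"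
      using sublinear_reduce_le_self[OF q, of a 0] sublinear_0[OF q] by simp
    show "0 \<le> sublinear_reduce q a 0"
      by (rule sublinear_reduce_greatest)
         (use sublinear_reduce_term_lower[OF q, of _ 0 a] sublinear_0[OF q] in simp)
  qed
qed

lemma minimal_sublinear_is_linear:
  assumes q: "sublinear q"
    and minimal: "\<And>r. sublinear r \<Longrightarrow> r \<le> q \<Longrightarrow> r = q"
  shows "linear q"
proof -
  have minus: "q (- a) = - q a" for a
  proof -
    have "sublinear_reduce q a = q"
      by (rule minimal) (auto simp: le_fun_def sublinear_sublinear_reduce q sublinear_reduce_le_self)
    then have "q (- a) \<le> - q a" using sublinear_reduce_minus[OF q, of a] by simp
    then show ?thesis using sublinear_minus_le[OF q, of "- a"] by simp
  qed
  have "q (u + v) = q u + q v" for u v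
    using sublinear_add[OF q, of u v] sublinear_add[OF q, of "- u" "- v"]
      minus[of "u + v"] minus[of u] minus[of v] by simp
  moreover have "q (c *\<^sub>R v) = c * q v" for c v
  proof (cases "c \<ge> 0")
    case False
    then have "q (c *\<^sub>R v) = q ((- c) *\<^sub>R (- v))" by simp
    also have "\<dots> = c * q v" using False sublinear_scaleR[OF q, of "- c" "- v"] minus[of v] by simp
    finally show ?thesis .
  qed (use sublinear_scaleR[OF q] in simp)
  ultimately show ?thesis by (intro linearI) simp_all
qed

lemma sublinear_chain_Inf:
  assumes "C \<noteq> {}" and sub: "\<And>q. q \<in> C \<Longrightarrow> sublinear q \<and> q \<le> q\<^sub>0"
    and chain: "\<And>q r. q \<in> C \<Longrightarrow> r \<in> C \<Longrightarrow> q \<le> r \<or> r \<le> q"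
  shows "sublinear (\<lambda>v. INF q\<in>C. q v)" and "\<And>q. q \<in> C \<Longrightarrow> (\<lambda>v. INF q\<in>C. q v) \<le> q"
proof -
  define g where "g = (\<lambda>v. INF q\<in>C. q v)"
  have lower: "g v \<le> q v" if "q \<in> C" for q v
    unfolding g_def
  proof (rule cINF_lower)
    show "bdd_below ((\<lambda>q. q v) ` C)"
      by (rule bdd_belowI2[where m = "- q\<^sub>0 (- v)"])
         (use sub in \<open>force simp: le_fun_def intro: order_trans[OF _ sublinear_minus_le]\<close>)
  qed (fact that)
  then show "q \<in> C \<Longrightarrow> (\<lambda>v. INF q\<in>C. q v) \<le> q" for q
    by (simp add: g_def le_fun_def)
  have greatest: "m \<le> g v" if "\<And>q. q \<in> C \<Longrightarrow> m \<le> q v" for m v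
    unfolding g_def using \<open>C \<noteq> {}\<close> that by (rule cINF_greatest)
  have "sublinear g"
  proof (rule sublinearI)
    fix u v
    have "g (u + v) - r v \<le> g u" if r: "r \<in> C" for r
    proof (rule greatest)
      fix q assume q: "q \<in> C"
      obtain p where p: "p \<in> C" "p \<le> q" "p \<le> r"
        using chain[OF q r] q r by blast
      have "g (u + v) \<le> p u + p v"
        using lower[OF p(1)] sub[OF p(1)] sublinear_add order_trans by blast
      also have "\<dots> \<le> q u + r v" using p by (simp add: le_fun_def add_mono)
      finally show "g (u + v) - r v \<le> q u" by simp
    qed
    then have "g (u + v) - g u \<le> g v" by (intro greatest) force
    then show "g (u + v) \<le> g u + g v" by simp
  next
    fix c :: real and v assume c: "c > 0"
    have "g (c *\<^sub>R v) / c \<le> g v"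
    proof (rule greatest)
      fix q assume q: "q \<in> C"
      have "g (c *\<^sub>R v) \<le> c * q v"
        using lower[OF q] sub[OF q] sublinear_scaleR c by (metis less_imp_le)
      then show "g (c *\<^sub>R v) / c \<le> q v" using c by (simp add: field_simps)
    qed
    then show "g (c *\<^sub>R v) \<le> c * g v" using c by (simp add: field_simps)
  next
    obtain q where q: "q \<in> C" using \<open>C \<noteq> {}\<close> by blast
    show "g 0 = 0"
    proof (rule antisym)
      show "g 0 \<le> 0" using lower[OF q, of 0] sub[OF q] sublinear_0 by force
      show "0 \<le> g 0" by (rule greatest) (use sub sublinear_0 in force)
    qed
  qed
  then show "sublinear (\<lambda>v. INF q\<in>C. q v)" by (simp add: g_def)
qed

lemma exists_minimal_sublinear:
  assumes "sublinear q\<^sub>0"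
  obtains q where "sublinear q" "q \<le> q\<^sub>0" "\<And>r. sublinear r \<Longrightarrow> r \<le> q \<Longrightarrow> r = q"
proof -
  define A where "A = {q. sublinear q \<and> q \<le> q\<^sub>0}"
  define R where "R = relation_of (\<lambda>q r :: 'a \<Rightarrow> real. r \<le> q) A"
  have "partial_order_on A R"
    unfolding R_def by (rule partial_order_on_relation_ofI) auto
  moreover have "\<exists>g\<in>A. \<forall>q\<in>C. g \<le> q" if "C \<in> Chains R" for C
  proof (cases "C = {}")
    case True
    then show ?thesis using assms by (auto simp: A_def)
  next
    case False
    have sub: "sublinear q \<and> q \<le> q\<^sub>0" if "q \<in> C" for q
      using \<open>C \<in> Chains R\<close> that by (auto simp: Chains_def R_def relation_of_def A_def)
    have chain: "q \<le> r \<or> r \<le> q" if "q \<in> C" "r \<in> C" for q r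
      using \<open>C \<in> Chains R\<close> that by (auto simp: Chains_def R_def relation_of_def)
    note inf = sublinear_chain_Inf[OF False sub chain]
    obtain q where "q \<in> C" using False by blast
    then have "(\<lambda>v. INF q\<in>C. q v) \<le> q\<^sub>0"
      using inf(2) sub order_trans by blast
    then show ?thesis using inf by (auto simp: A_def)
  qed
  ultimately obtain m where "m \<in> A" "\<And>q. q \<in> A \<Longrightarrow> q \<le> m \<Longrightarrow> q = m"
    using predicate_Zorn[of A "\<lambda>q r. r \<le> q"] unfolding R_def by blast
  then show ?thesis using that by (auto simp: A_def)
qed

theorem hahn_banach_sublinear:
  assumes p: "sublinear p"
  obtains f where "linear f" "f \<le> p" "f x\<^sub>0 = p x\<^sub>0"
proof -
  obtain q where q: "sublinear q" "q \<le> sublinear_reduce p x\<^sub>0"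
    and minimal: "\<And>r. sublinear r \<Longrightarrow> r \<le> q \<Longrightarrow> r = q"
    using exists_minimal_sublinear[OF sublinear_sublinear_reduce[OF p]] by blast
  have lin: "linear q" using q(1) minimal by (rule minimal_sublinear_is_linear)
  have "q \<le> p"
    using q(2) sublinear_reduce_le_self[OF p] by (auto simp: le_fun_def intro: order_trans)
  moreover have "p x\<^sub>0 \<le> q x\<^sub>0"
    using le_funD[OF q(2), of "- x\<^sub>0"] sublinear_reduce_minus[OF p, of x\<^sub>0] linear_neg[OF lin]
    by simp
  ultimately show ?thesis
    using that lin by (metis antisym le_funD)
qed

lemma sublinear_infdist:
  fixes M :: "'a::real_normed_vector set"
  assumes M: "subspace M"
  shows "sublinear (\<lambda>v. infdist v M)"
proof -
  have "M \<noteq> {}" using subspace_0[OF M] by blast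
  then have greatest: "d \<le> infdist x M" if "\<And>m. m \<in> M \<Longrightarrow> d \<le> dist x m" for d x
    using that by (simp add: infdist_notempty cINF_greatest)
  show ?thesis
  proof (rule sublinearI)
    fix u v
    have "infdist (u + v) M - dist v m' \<le> infdist u M" if m': "m' \<in> M" for m'
    proof (rule greatest)
      fix m assume m: "m \<in> M"
      have "infdist (u + v) M \<le> dist (u + v) (m + m')"
        using M m m' by (simp add: infdist_le subspace_add)
      also have "\<dots> \<le> dist u m + dist v m'"
        unfolding dist_norm by (rule order_trans[OF _ norm_triangle_ineq]) (simp add: algebra_simps)
      finally show "infdist (u + v) M - dist v m' \<le> dist u m" by simp
    qed
    then have "infdist (u + v) M - infdist u M \<le> infdist v M" by (intro greatest) force
    then show "infdist (u + v) M \<le> infdist u M + infdist v M" by simp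
  next
    fix c :: real and v assume c: "c > 0"
    have "infdist (c *\<^sub>R v) M / c \<le> infdist v M"
    proof (rule greatest)
      fix m assume m: "m \<in> M"
      have "infdist (c *\<^sub>R v) M \<le> dist (c *\<^sub>R v) (c *\<^sub>R m)"
        using M m by (simp add: infdist_le subspace_scale)
      also have "\<dots> = c * dist v m"
        using c by (simp add: dist_norm flip: scaleR_diff_right)
      finally show "infdist (c *\<^sub>R v) M / c \<le> dist v m" using c by (simp add: field_simps)
    qed
    then show "infdist (c *\<^sub>R v) M \<le> c * infdist v M" using c by (simp add: field_simps)
  qed (use subspace_0[OF M] in simp)
qed

lemma exists_functional_infdist:
  fixes M :: "'a::real_normed_vector set"
  assumes M: "subspace M"
  obtains F :: "'a \<Rightarrow>\<^sub>L real"
  where "norm F \<le> 1" "\<And>m. m \<in> M \<Longrightarrow> F m = 0" "F z = infdist z M"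
proof -
  obtain f where f: "linear f" "f \<le> (\<lambda>v. infdist v M)" "f z = infdist z M"
    using hahn_banach_sublinear[OF sublinear_infdist[OF M]] by blast
  have le: "f v \<le> infdist v M" for v using le_funD[OF f(2)] .
  have infdist_le_norm: "infdist v M \<le> norm v" for v
    using infdist_le[OF subspace_0[OF M], of v] by simp
  have f_norm: "\<bar>f v\<bar> \<le> norm v" for v
    using le[of v] le[of "- v"] infdist_le_norm[of v] infdist_le_norm[of "- v"]
      linear_neg[OF f(1), of v] by (simp add: abs_le_iff)
  have f_M: "f m = 0" if "m \<in> M" for m
    using le[of m] le[of "- m"] that subspace_neg[OF M that] linear_neg[OF f(1), of m]
    by simp
  have bl: "bounded_linear f"
    using f(1) f_norm by (intro bounded_linear_intro[where K = 1]) (auto simp: linear_add linear_scale)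
  define F where "F = Blinfun f"
  have F_apply: "F v = f v" for v
    unfolding F_def by (simp add: bounded_linear_Blinfun_apply[OF bl])
  have "norm F \<le> 1"
    by (rule norm_blinfun_bound) (use f_norm in \<open>simp_all add: F_apply\<close>)
  then show ?thesis
    using that[of F] f_M f(3) by (simp add: F_apply)
qed

lemma exists_norming_functional:
  fixes x :: "'a::real_normed_vector"
  obtains F :: "'a \<Rightarrow>\<^sub>L real" where "norm F \<le> 1" "F x = norm x"
proof -
  obtain F :: "'a \<Rightarrow>\<^sub>L real" where "norm F \<le> 1" "F x = infdist x {0}"
    using exists_functional_infdist[OF subspace_single_0] by metis
  then show ?thesis using that by simp
qed

lemma exists_separating_functional:
  fixes M :: "'a::real_normed_vector set"
  assumes M: "subspace M" "closed M" and z: "z \<notin> M"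
  obtains F :: "'a \<Rightarrow>\<^sub>L real" where "\<And>m. m \<in> M \<Longrightarrow> F m = 0" "F z \<noteq> 0"
proof -
  obtain F :: "'a \<Rightarrow>\<^sub>L real" where "\<And>m. m \<in> M \<Longrightarrow> F m = 0" "F z = infdist z M"
    using exists_functional_infdist[OF M(1)] by metis
  moreover have "infdist z M > 0"
    using M z subspace_0[OF M(1)] by (intro infdist_pos_not_in_closed) auto
  ultimately show ?thesis using that[of F] by simp
qed

section \<open>Sequence spaces with a basis\<close>

locale sequence_space =
  fixes D :: "(nat \<Rightarrow> real) set" and nd :: "(nat \<Rightarrow> real) \<Rightarrow> real"
  assumes seq_space: "seq_space D nd" and seq_basis: "seq_basis D nd"
    and dual_basis: "dual_basis D nd"
begin

lemma zero_mem: "(\<lambda>j. 0) \<in> D"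
  and add_mem: "a \<in> D \<Longrightarrow> b \<in> D \<Longrightarrow> (\<lambda>j. a j + b j) \<in> D"
  and scale_mem: "a \<in> D \<Longrightarrow> (\<lambda>j. c * a j) \<in> D"
  and nd_nonneg: "a \<in> D \<Longrightarrow> 0 \<le> nd a"
  and nd_eq_0_iff: "a \<in> D \<Longrightarrow> nd a = 0 \<longleftrightarrow> a = (\<lambda>j. 0)"
  and nd_scale: "a \<in> D \<Longrightarrow> nd (\<lambda>j. c * a j) = \<bar>c\<bar> * nd a"
  using seq_space by (simp_all add: seq_space_def)

lemma diff_mem: "a \<in> D \<Longrightarrow> b \<in> D \<Longrightarrow> (\<lambda>j. a j - b j) \<in> D"
  using add_mem[of a "\<lambda>j. (- 1) * b j"] scale_mem[of b "- 1"] by simp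

lemma unitv_mem: "unitv n \<in> D"
  using seq_basis by (simp add: seq_basis_def)

lemma psum_mem: "psum c N \<in> D"
  by (induction N) (auto simp: psum_def zero_mem intro!: add_mem scale_mem unitv_mem)

lemma psum_tendsto: "a \<in> D \<Longrightarrow> (\<lambda>N. nd (\<lambda>j. a j - psum a N j)) \<longlonglongrightarrow> 0"
  using seq_basis by (simp add: seq_basis_def)

lemma dual_rep_add:
    "dual_rep D nd \<beta> b \<Longrightarrow> a \<in> D \<Longrightarrow> a' \<in> D \<Longrightarrow> b (\<lambda>j. a j + a' j) = b a + b a'"
  and dual_rep_scale: "dual_rep D nd \<beta> b \<Longrightarrow> a \<in> D \<Longrightarrow> b (\<lambda>j. c * a j) = c * b a"
  and dual_rep_unitv: "dual_rep D nd \<beta> b \<Longrightarrow> b (unitv n) = \<beta> n"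
  by (simp_all add: dual_rep_def)

lemma dual_rep_bounded:
  assumes "dual_rep D nd \<beta> b"
  obtains K where "K \<ge> 0" "\<And>a. a \<in> D \<Longrightarrow> \<bar>b a\<bar> \<le> K * nd a"
proof -
  obtain K where "\<forall>a\<in>D. \<bar>b a\<bar> \<le> K * nd a" using assms by (auto simp: dual_rep_def)
  then have "\<bar>b a\<bar> \<le> max K 0 * nd a" if "a \<in> D" for a
    using that nd_nonneg by (metis max.cobounded1 mult_right_mono order_trans)
  then show ?thesis using that[of "max K 0"] by simp
qed

lemma dual_rep_diff:
  "dual_rep D nd \<beta> b \<Longrightarrow> a \<in> D \<Longrightarrow> a' \<in> D \<Longrightarrow> b (\<lambda>j. a j - a' j) = b a - b a'"
  using dual_rep_add[of \<beta> b a "\<lambda>j. (- 1) * a' j"] dual_rep_scale[of \<beta> b a' "- 1"] scale_mem[of a' "- 1"]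
  by simp

lemma dual_rep_psum: "dual_rep D nd \<beta> b \<Longrightarrow> b (psum c N) = (\<Sum>n<N. c n * \<beta> n)"
proof (induction N)
  case 0
  then show ?case using dual_rep_scale[OF 0 zero_mem, of 0] by (simp add: psum_def)
next
  case (Suc N)
  have "psum c (Suc N) = (\<lambda>j. psum c N j + c N * unitv N j)" by (simp add: psum_def)
  then show ?case
    using Suc dual_rep_add[OF Suc.prems psum_mem scale_mem[OF unitv_mem]]
      dual_rep_scale[OF Suc.prems unitv_mem] dual_rep_unitv[OF Suc.prems] by simp
qed

lemma dual_rep_sums:
  assumes b: "dual_rep D nd \<beta> b" and a: "a \<in> D"
  shows "(\<lambda>n. a n * \<beta> n) sums b a"
proof -
  obtain K where K: "\<And>a. a \<in> D \<Longrightarrow> \<bar>b a\<bar> \<le> K * nd a" using dual_rep_bounded[OF b] by blast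
  have bound: "norm (b a - (\<Sum>n<N. a n * \<beta> n)) \<le> K * nd (\<lambda>j. a j - psum a N j)" for N
  proof -
    have "b (\<lambda>j. a j - psum a N j) = b a - (\<Sum>n<N. a n * \<beta> n)"
      by (simp only: dual_rep_diff[OF b a psum_mem] dual_rep_psum[OF b])
    then show ?thesis using K[OF diff_mem[OF a psum_mem[of a N]]] by simp
  qed
  have "(\<lambda>N. K * nd (\<lambda>j. a j - psum a N j)) \<longlonglongrightarrow> 0"
    using tendsto_mult_right_zero[OF psum_tendsto[OF a]] .
  with always_eventually[OF allI[OF bound]]
  have "(\<lambda>N. b a - (\<Sum>n<N. a n * \<beta> n)) \<longlonglongrightarrow> 0"
    by (rule Lim_null_comparison)
  from tendsto_diff[OF tendsto_const[of "b a"] this] show ?thesis by (simp add: sums_def)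
qed

lemma dual_rep_unique: "dual_rep D nd \<beta> b \<Longrightarrow> dual_rep D nd \<beta> b' \<Longrightarrow> a \<in> D \<Longrightarrow> b a = b' a"
  by (metis dual_rep_sums sums_unique2)

lemma abs_dual_rep_le_opnorm:
  assumes b: "dual_rep D nd \<beta> b" and a: "a \<in> D"
  shows "\<bar>b a\<bar> \<le> dual_opnorm D nd b * nd a"
proof -
  let ?S = "{\<bar>b a\<bar> | a. a \<in> D \<and> nd a \<le> 1}"
  obtain K where K: "K \<ge> 0" "\<And>a. a \<in> D \<Longrightarrow> \<bar>b a\<bar> \<le> K * nd a" using dual_rep_bounded[OF b] by blast
  have bdd: "bdd_above ?S"
    by (rule bdd_aboveI[where M = K]) (use K in \<open>auto intro: order_trans mult_left_le\<close>)
  show ?thesis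
  proof (cases "nd a = 0")
    case True
    then show ?thesis
      using nd_eq_0_iff[OF a] dual_rep_scale[OF b zero_mem, of 0] by simp
  next
    case False
    then have pos: "nd a > 0" using nd_nonneg[OF a] by simp
    have "nd (\<lambda>j. (1 / nd a) * a j) = 1" using nd_scale[OF a, of "1 / nd a"] pos by simp
    then have "\<bar>b (\<lambda>j. (1 / nd a) * a j)\<bar> \<le> Sup ?S"
      using scale_mem[OF a, of "1 / nd a"] by (intro cSup_upper[OF _ bdd]) force
    then have "nd a * \<bar>b (\<lambda>j. (1 / nd a) * a j)\<bar> \<le> nd a * Sup ?S"
      using pos by (intro mult_left_mono) auto
    moreover have "nd a * \<bar>b (\<lambda>j. (1 / nd a) * a j)\<bar> = \<bar>b a\<bar>"
      using dual_rep_scale[OF b a, of "1 / nd a"] pos by (simp add: abs_mult)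
    ultimately show ?thesis by (simp add: dual_opnorm_def mult.commute)
  qed
qed

lemma dual_norm_eq_opnorm:
  assumes b: "dual_rep D nd \<beta> b"
  shows "dual_norm D nd \<beta> = dual_opnorm D nd b"
proof -
  have "dual_rep D nd \<beta> (SOME b. dual_rep D nd \<beta> b)" using b by (rule someI[of "dual_rep D nd \<beta>"])
  then have "a \<in> D \<Longrightarrow> (SOME b. dual_rep D nd \<beta> b) a = b a" for a
    using b by (rule dual_rep_unique)
  then have "{\<bar>(SOME b. dual_rep D nd \<beta> b) a\<bar> | a. a \<in> D \<and> nd a \<le> 1}
      = {\<bar>b a\<bar> | a. a \<in> D \<and> nd a \<le> 1}"
    by (metis (no_types, lifting))
  then show ?thesis unfolding dual_norm_def dual_opnorm_def by simp
qed

lemma abs_dual_rep_le: "dual_rep D nd \<beta> b \<Longrightarrow> a \<in> D \<Longrightarrow> \<bar>b a\<bar> \<le> dual_norm D nd \<beta> * nd a"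
  using abs_dual_rep_le_opnorm dual_norm_eq_opnorm by simp

lemma dual_norm_nonneg:
  assumes b: "dual_rep D nd \<beta> b"
  shows "0 \<le> dual_norm D nd \<beta>"
proof -
  have "unitv 0 \<noteq> (\<lambda>j. 0)" by (auto simp: unitv_def fun_eq_iff)
  then have "nd (unitv 0) > 0"
    using nd_nonneg[OF unitv_mem] nd_eq_0_iff[OF unitv_mem] by (simp add: less_le)
  moreover have "0 \<le> dual_norm D nd \<beta> * nd (unitv 0)"
    using abs_dual_rep_le[OF b unitv_mem, of 0] by (rule order_trans[OF abs_ge_zero])
  ultimately show ?thesis by (simp add: zero_le_mult_iff)
qed

lemma coordinate_bounded: "\<exists>K. \<forall>a\<in>D. \<bar>a n\<bar> \<le> K * nd a"
proof -
  obtain e where e: "dual_rep D nd (unitv n) e"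
    using dual_basis by (auto simp: dual_basis_def in_dual_def)
  obtain K where K: "\<And>a. a \<in> D \<Longrightarrow> \<bar>e a\<bar> \<le> K * nd a" using dual_rep_bounded[OF e] by blast
  have "e a = a n" if "a \<in> D" for a
  proof -
    have "(\<lambda>m. a m * unitv n m) sums a n"
      using sums_single[of n a] by (simp add: unitv_def if_distrib cong: if_cong)
    then show ?thesis using dual_rep_sums[OF e that] sums_unique2 by blast
  qed
  then show ?thesis using K by metis
qed

lemma dual_rep_tail:
  assumes b: "dual_rep D nd \<beta> b"
  shows "dual_rep D nd (\<lambda>j. \<beta> j - psum \<beta> N j) (\<lambda>a. b a - (\<Sum>n<N. \<beta> n * a n))"
proof -
  obtain C where C: "\<And>n a. a \<in> D \<Longrightarrow> \<bar>a n\<bar> \<le> C n * nd a"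
    using coordinate_bounded by metis
  obtain K where K: "\<And>a. a \<in> D \<Longrightarrow> \<bar>b a\<bar> \<le> K * nd a" using dual_rep_bounded[OF b] by blast
  have bound: "\<bar>b a - (\<Sum>n<N. \<beta> n * a n)\<bar> \<le> (K + (\<Sum>n<N. \<bar>\<beta> n\<bar> * C n)) * nd a"
    if a: "a \<in> D" for a
  proof -
    have "\<bar>b a - (\<Sum>n<N. \<beta> n * a n)\<bar> \<le> \<bar>b a\<bar> + (\<Sum>n<N. \<bar>\<beta> n\<bar> * \<bar>a n\<bar>)"
      by (rule order_trans[OF abs_triangle_ineq4]) (auto intro: order_trans[OF sum_abs] simp: abs_mult)
    also have "\<dots> \<le> K * nd a + (\<Sum>n<N. \<bar>\<beta> n\<bar> * (C n * nd a))"
      using K[OF a] C[OF a] by (intro add_mono sum_mono mult_left_mono) auto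
    finally show ?thesis by (simp add: algebra_simps sum_distrib_left)
  qed
  show ?thesis
    unfolding dual_rep_def
  proof (intro conjI ballI allI)
    fix a a' assume "a \<in> D" "a' \<in> D"
    then show "b (\<lambda>j. a j + a' j) - (\<Sum>n<N. \<beta> n * (a n + a' n))
        = b a - (\<Sum>n<N. \<beta> n * a n) + (b a' - (\<Sum>n<N. \<beta> n * a' n))"
      using dual_rep_add[OF b] by (simp add: algebra_simps sum.distrib)
  next
    fix c a assume "a \<in> D"
    then show "b (\<lambda>j. c * a j) - (\<Sum>n<N. \<beta> n * (c * a n)) = c * (b a - (\<Sum>n<N. \<beta> n * a n))"
      using dual_rep_scale[OF b] by (simp add: algebra_simps sum_distrib_left)
  next
    show "\<exists>K. \<forall>a\<in>D. \<bar>b a - (\<Sum>n<N. \<beta> n * a n)\<bar> \<le> K * nd a"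
      using bound by blast
  next
    fix m
    have "(\<Sum>n<N. \<beta> n * unitv m n) = psum \<beta> N m"
      unfolding psum_def unitv_def by (rule sum.cong) auto
    then show "b (unitv m) - (\<Sum>n<N. \<beta> n * unitv m n) = \<beta> m - psum \<beta> N m"
      using dual_rep_unitv[OF b] by simp
  qed
qed

end

section \<open>Frames, co-frames and the operators \<open>S\<close> and \<open>V\<close>\<close>

lemma frame_if_coeffs_transform:
  fixes ys ws :: "nat \<Rightarrow> ('a::banach \<Rightarrow>\<^sub>L real)" and T :: "'a \<Rightarrow> 'a"
  assumes "frame D nd ys"
    and coeffs: "\<And>n x. blinfun_apply (ws n) x = blinfun_apply (ys n) (T x)"
    and "K > 0" "\<And>x. norm x \<le> K * norm (T x)"
    and "C > 0" "\<And>x. norm (T x) \<le> C * norm x"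
  shows "frame D nd ws"
proof -
  obtain A B where AB: "A > 0" "B > 0"
    and ys: "\<And>x. (\<lambda>n. blinfun_apply (ys n) x) \<in> D
      \<and> A * norm x \<le> nd (\<lambda>n. blinfun_apply (ys n) x)
      \<and> nd (\<lambda>n. blinfun_apply (ys n) x) \<le> B * norm x"
    using assms(1) unfolding frame_def by blast
  have "(\<lambda>n. blinfun_apply (ws n) x) \<in> D
      \<and> A / K * norm x \<le> nd (\<lambda>n. blinfun_apply (ws n) x)
      \<and> nd (\<lambda>n. blinfun_apply (ws n) x) \<le> B * C * norm x" for x
  proof -
    have "A / K * norm x \<le> A * norm (T x)"
      using assms(4)[of x] \<open>K > 0\<close> AB(1) by (simp add: field_simps)
    moreover have "B * norm (T x) \<le> B * C * norm x"
      using assms(6)[of x] AB(2) by (simp add: mult.assoc)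
    ultimately show ?thesis
      using ys[of "T x"] unfolding coeffs by auto
  qed
  then show ?thesis
    unfolding frame_def using AB \<open>K > 0\<close> \<open>C > 0\<close>
    by (intro exI[of _ "A / K"] exI[of _ "B * C"]) simp
qed

lemma surj_if_bounded_below_and_dense:
  fixes f :: "'a::banach \<Rightarrow> 'b::real_normed_vector"
  assumes f: "bounded_linear f" and "C > 0" "\<And>x. norm x \<le> C * norm (f x)"
    and dense: "\<And>F :: 'b \<Rightarrow>\<^sub>L real. (\<And>x. blinfun_apply F (f x) = 0) \<Longrightarrow> F = 0"
  shows "surj f"
proof (rule ccontr)
  assume "\<not> surj f"
  then obtain z where z: "z \<notin> range f" by blast
  have "complete (range f)"
  proof (rule complete_isometric_image[OF _ subspace_UNIV f _ complete_UNIV])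
    show "0 < 1 / C" using \<open>C > 0\<close> by simp
    show "\<forall>x\<in>UNIV. 1 / C * norm x \<le> norm (f x)"
      using assms(3) \<open>C > 0\<close> by (simp add: field_simps mult.commute)
  qed
  then have "closed (range f)" by (rule complete_imp_closed)
  moreover have "subspace (range f)"
    using f by (intro linear_subspace_image bounded_linear.linear subspace_UNIV)
  ultimately obtain F :: "'b \<Rightarrow>\<^sub>L real" where "\<And>m. m \<in> range f \<Longrightarrow> F m = 0" "F z \<noteq> 0"
    using exists_separating_functional z by blast
  then show False using dense by force
qed

lemma Cauchy_if_norm_diff_le:
  fixes s :: "nat \<Rightarrow> 'a::real_normed_vector"
  assumes le: "\<And>m n. norm (s m - s n) \<le> g m + g n" and g: "g \<longlonglongrightarrow> 0"
  shows "Cauchy s"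
proof (rule CauchyI)
  fix e :: real assume "e > 0"
  then obtain M where M: "\<And>n. n \<ge> M \<Longrightarrow> norm (g n) < e / 2"
    using LIMSEQ_D[OF g, of "e / 2"] by auto
  have "norm (s m - s n) < e" if "m \<ge> M" "n \<ge> M" for m n
    using le[of m n] M[OF that(1)] M[OF that(2)] by simp
  then show "\<exists>M. \<forall>m\<ge>M. \<forall>n\<ge>M. norm (s m - s n) < e" by blast
qed

locale coframe_frame = sequence_space D nd for D nd +
  fixes xs :: "nat \<Rightarrow> 'a::banach" and ys :: "nat \<Rightarrow> ('a \<Rightarrow>\<^sub>L real)"
  assumes coframe: "coframe D nd xs" and frame: "frame D nd ys"
begin

abbreviation frame_coeffs :: "'a \<Rightarrow> nat \<Rightarrow> real" where
  "frame_coeffs x \<equiv> \<lambda>n. blinfun_apply (ys n) x"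

abbreviation coframe_coeffs :: "('a \<Rightarrow>\<^sub>L real) \<Rightarrow> nat \<Rightarrow> real" where
  "coframe_coeffs y \<equiv> \<lambda>n. blinfun_apply y (xs n)"

lemma frame_coeffs_mem: "frame_coeffs x \<in> D"
  using frame by (auto simp: frame_def)

lemma frame_upper_bound:
  obtains B where "B > 0" "\<And>x. nd (frame_coeffs x) \<le> B * norm x"
  using frame unfolding frame_def by blast

lemma coframe_upper_bound:
  obtains B where "B > 0" "\<And>y. dual_norm D nd (coframe_coeffs y) \<le> B * norm y"
  using coframe unfolding coframe_def by blast

definition coframe_functional :: "('a \<Rightarrow>\<^sub>L real) \<Rightarrow> (nat \<Rightarrow> real) \<Rightarrow> real" where
  "coframe_functional y = (SOME b. dual_rep D nd (coframe_coeffs y) b)"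

lemma dual_rep_coframe_functional: "dual_rep D nd (coframe_coeffs y) (coframe_functional y)"
  using coframe unfolding coframe_def in_dual_def coframe_functional_def by (metis someI_ex)

lemma
  assumes c: "dual_rep D nd \<gamma> c" and B: "\<And>x. nd (frame_coeffs x) \<le> B * norm x"
  shows abs_dual_rep_frame_coeffs_le: "\<bar>c (frame_coeffs x)\<bar> \<le> dual_norm D nd \<gamma> * B * norm x"
    and bounded_linear_dual_rep_frame_coeffs: "bounded_linear (\<lambda>x. c (frame_coeffs x))"
proof -
  have bound: "\<bar>c (frame_coeffs x)\<bar> \<le> dual_norm D nd \<gamma> * B * norm x" for x
    using abs_dual_rep_le[OF c frame_coeffs_mem, of x]
      mult_left_mono[OF B dual_norm_nonneg[OF c], of x] by (simp add: mult.assoc)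
  then show "\<bar>c (frame_coeffs x)\<bar> \<le> dual_norm D nd \<gamma> * B * norm x" .
  show "bounded_linear (\<lambda>x. c (frame_coeffs x))"
  proof (rule bounded_linear_intro[where K = "dual_norm D nd \<gamma> * B"])
    show "c (frame_coeffs (x + x')) = c (frame_coeffs x) + c (frame_coeffs x')" for x x'
      using dual_rep_add[OF c frame_coeffs_mem frame_coeffs_mem] by (simp add: blinfun.add_right)
    show "c (frame_coeffs (r *\<^sub>R x)) = r *\<^sub>R c (frame_coeffs x)" for r x
      using dual_rep_scale[OF c frame_coeffs_mem] by (simp add: blinfun.scaleR_right)
    show "norm (c (frame_coeffs x)) \<le> norm x * (dual_norm D nd \<gamma> * B)" for x
      using bound[of x] by (simp add: mult.commute)
  qed
qed

text \<open>The operator \<open>V\<close> of the theorem: \<open>V y\<close> is the functional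
  \<open>x \<mapsto> \<Sum>n. y(x\<^sub>n) y\<^sub>n(x)\<close>, obtained by pairing the \<open>X\<^sub>d\<^sup>*\<close>-element
  \<open>(y(x\<^sub>n))\<^sub>n\<close> with the \<open>X\<^sub>d\<close>-element \<open>(y\<^sub>n(x))\<^sub>n\<close>.\<close>
definition dual_frame_op :: "('a \<Rightarrow>\<^sub>L real) \<Rightarrow> ('a \<Rightarrow>\<^sub>L real)" where
  "dual_frame_op y = Blinfun (\<lambda>x. coframe_functional y (frame_coeffs x))"

lemma dual_frame_op_apply: "blinfun_apply (dual_frame_op y) x = coframe_functional y (frame_coeffs x)"
proof -
  obtain B where "\<And>x. nd (frame_coeffs x) \<le> B * norm x" using frame_upper_bound by blast
  then have "bounded_linear (\<lambda>x. coframe_functional y (frame_coeffs x))"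
    by (rule bounded_linear_dual_rep_frame_coeffs[OF dual_rep_coframe_functional])
  then show ?thesis
    unfolding dual_frame_op_def by (simp add: bounded_linear_Blinfun_apply)
qed

text \<open>Convergence in \<open>X\<^sup>*\<close> comes from the coordinate functionals being a basis
  of \<open>X\<^sub>d\<^sup>*\<close>: the tails of \<open>(y(x\<^sub>n))\<^sub>n\<close> tend to \<open>0\<close> in the norm of \<open>X\<^sub>d\<^sup>*\<close>.\<close>
lemma dual_frame_op_sums: "(\<lambda>n. blinfun_apply y (xs n) *\<^sub>R ys n) sums dual_frame_op y"
proof -
  obtain B where B: "B > 0" "\<And>x. nd (frame_coeffs x) \<le> B * norm x"
    using frame_upper_bound by blast
  define \<beta> where "\<beta> n = blinfun_apply y (xs n)" for n
  define tail where "tail N = dual_norm D nd (\<lambda>j. \<beta> j - psum \<beta> N j)" for N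
  have b: "dual_rep D nd \<beta> (coframe_functional y)"
    unfolding \<beta>_def by (rule dual_rep_coframe_functional)
  have bound: "norm ((\<Sum>n<N. \<beta> n *\<^sub>R ys n) - dual_frame_op y) \<le> tail N * B" for N
  proof -
    note tail_rep = dual_rep_tail[OF b, of N]
    have "norm (dual_frame_op y - (\<Sum>n<N. \<beta> n *\<^sub>R ys n)) \<le> tail N * B"
    proof (rule norm_blinfun_bound)
      show "0 \<le> tail N * B" using dual_norm_nonneg[OF tail_rep] B(1) by (simp add: tail_def)
      fix x
      have "blinfun_apply (dual_frame_op y - (\<Sum>n<N. \<beta> n *\<^sub>R ys n)) x
          = coframe_functional y (frame_coeffs x)
            - (\<Sum>n<N. \<beta> n * blinfun_apply (ys n) x)"
        by (simp add: dual_frame_op_apply blinfun.diff_left blinfun.sum_left blinfun.scaleR_left)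
      then show "norm (blinfun_apply (dual_frame_op y - (\<Sum>n<N. \<beta> n *\<^sub>R ys n)) x)
          \<le> tail N * B * norm x"
        using abs_dual_rep_frame_coeffs_le[OF tail_rep B(2), of x] by (simp add: tail_def)
    qed
    then show ?thesis by (simp add: norm_minus_commute)
  qed
  have "tail \<longlonglongrightarrow> 0"
    using dual_basis coframe unfolding tail_def dual_basis_def coframe_def \<beta>_def by blast
  then have "(\<lambda>N. tail N * B) \<longlonglongrightarrow> 0"
    by (rule tendsto_mult_left_zero)
  with always_eventually[OF allI[OF bound]]
  have "(\<lambda>N. (\<Sum>n<N. \<beta> n *\<^sub>R ys n) - dual_frame_op y) \<longlonglongrightarrow> 0"
    by (rule Lim_null_comparison)
  then show ?thesis
    unfolding sums_def \<beta>_def by (rule LIM_zero_cancel)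
qed

lemma suminf_dual_frame_op: "(\<Sum>n. blinfun_apply y (xs n) *\<^sub>R ys n) = dual_frame_op y"
  using dual_frame_op_sums by (rule sums_unique[symmetric])

lemma bounded_linear_dual_frame_op: "bounded_linear dual_frame_op"
proof -
  obtain B where B: "B > 0" "\<And>x. nd (frame_coeffs x) \<le> B * norm x"
    using frame_upper_bound by blast
  obtain B' where B': "B' > 0" "\<And>y. dual_norm D nd (coframe_coeffs y) \<le> B' * norm y"
    using coframe_upper_bound by blast
  show ?thesis
  proof (rule bounded_linear_intro[where K = "B' * B"])
    fix y y'
    have "(\<lambda>n. blinfun_apply (y + y') (xs n) *\<^sub>R ys n) sums (dual_frame_op y + dual_frame_op y')"
      using sums_add[OF dual_frame_op_sums dual_frame_op_sums]
      by (simp add: blinfun.add_left scaleR_add_left)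
    then show "dual_frame_op (y + y') = dual_frame_op y + dual_frame_op y'"
      using dual_frame_op_sums sums_unique2 by blast
  next
    fix r :: real and y
    have "(\<lambda>n. blinfun_apply (r *\<^sub>R y) (xs n) *\<^sub>R ys n) sums (r *\<^sub>R dual_frame_op y)"
      using sums_scaleR_right[OF dual_frame_op_sums, of r] by (simp add: blinfun.scaleR_left)
    then show "dual_frame_op (r *\<^sub>R y) = r *\<^sub>R dual_frame_op y"
      using dual_frame_op_sums sums_unique2 by blast
  next
    fix y
    note b = dual_rep_coframe_functional[of y]
    have "norm (dual_frame_op y) \<le> dual_norm D nd (coframe_coeffs y) * B"
      using abs_dual_rep_frame_coeffs_le[OF b B(2)] dual_norm_nonneg[OF b] B(1)
      by (intro norm_blinfun_bound) (simp_all add: dual_frame_op_apply)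
    also have "\<dots> \<le> B' * norm y * B"
      using B'(2)[of y] B(1) by (simp add: mult_right_mono)
    finally show "norm (dual_frame_op y) \<le> norm y * (B' * B)" by (simp add: algebra_simps)
  qed
qed

text \<open>Testing partial sums against a norming functional \<open>f\<close> bounds their distance by
  tails of \<open>a\<close> in \<open>X\<^sub>d\<close>, since \<open>f(\<Sum>n<N. a\<^sub>n x\<^sub>n)\<close> is the pairing of
  \<open>psum a N\<close> with \<open>(f(x\<^sub>n))\<^sub>n \<in> X\<^sub>d\<^sup>*\<close>.\<close>
lemma summable_coframe_series:
  assumes a: "a \<in> D"
  shows "summable (\<lambda>n. a n *\<^sub>R xs n)"
proof -
  obtain B where B: "B > 0" "\<And>y. dual_norm D nd (coframe_coeffs y) \<le> B * norm y"
    using coframe_upper_bound by blast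
  define s where "s N = (\<Sum>n<N. a n *\<^sub>R xs n)" for N
  define g where "g N = B * nd (\<lambda>j. a j - psum a N j)" for N
  have "norm (s m - s n) \<le> g m + g n" for m n
  proof -
    obtain f :: "'a \<Rightarrow>\<^sub>L real" where f: "norm f \<le> 1" "blinfun_apply f (s m - s n) = norm (s m - s n)"
      using exists_norming_functional by blast
    note b = dual_rep_coframe_functional[of f]
    have f_s: "blinfun_apply f (s N)
        = coframe_functional f a - coframe_functional f (\<lambda>j. a j - psum a N j)" for N
      using dual_rep_diff[OF b a psum_mem[of a N]] dual_rep_psum[OF b, of a N]
      by (simp add: s_def blinfun.sum_right blinfun.scaleR_right)
    have tail: "\<bar>coframe_functional f (\<lambda>j. a j - psum a N j)\<bar> \<le> g N" for N
    proof -
      note a_N = diff_mem[OF a psum_mem[of a N]]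
      have "dual_norm D nd (coframe_coeffs f) \<le> B"
        using B(2)[of f] f(1) B(1) by (metis mult_left_le order_trans norm_ge_zero less_imp_le)
      then show ?thesis
        using abs_dual_rep_le[OF b a_N] nd_nonneg[OF a_N]
        unfolding g_def by (meson mult_right_mono order_trans)
    qed
    have "norm (s m - s n) = blinfun_apply f (s m) - blinfun_apply f (s n)"
      using f(2) by (simp add: blinfun.diff_right)
    also have "\<dots> \<le> g m + g n"
      using f_s[of m] f_s[of n] tail[of m] tail[of n] by linarith
    finally show ?thesis .
  qed
  moreover have "g \<longlonglongrightarrow> 0"
    unfolding g_def using tendsto_mult_right_zero[OF psum_tendsto[OF a]] .
  ultimately have "Cauchy s" by (rule Cauchy_if_norm_diff_le)
  then show ?thesis
    unfolding summable_iff_convergent s_def by (simp add: Cauchy_convergent_iff)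
qed

definition frame_op :: "'a \<Rightarrow> 'a" where
  "frame_op x = (\<Sum>n. blinfun_apply (ys n) x *\<^sub>R xs n)"

lemma frame_op_sums: "(\<lambda>n. blinfun_apply (ys n) x *\<^sub>R xs n) sums frame_op x"
  unfolding frame_op_def by (rule summable_sums[OF summable_coframe_series[OF frame_coeffs_mem]])

lemma frame_op_adjoint: "blinfun_apply y (frame_op x) = blinfun_apply (dual_frame_op y) x"
proof -
  have "(\<lambda>n. blinfun_apply y (blinfun_apply (ys n) x *\<^sub>R xs n)) sums blinfun_apply y (frame_op x)"
    by (rule bounded_linear.sums[OF blinfun.bounded_linear_right frame_op_sums])
  moreover have "(\<lambda>n. blinfun_apply (blinfun_apply y (xs n) *\<^sub>R ys n) x)
      sums blinfun_apply (dual_frame_op y) x"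
    by (rule bounded_linear.sums[OF blinfun.bounded_linear_left dual_frame_op_sums])
  ultimately show ?thesis
    by (simp add: blinfun.scaleR_right blinfun.scaleR_left mult.commute sums_unique2)
qed

lemma bounded_linear_frame_op: "bounded_linear frame_op"
proof -
  obtain K where K: "K > 0" "\<And>y. norm (dual_frame_op y) \<le> norm y * K"
    using bounded_linear.pos_bounded[OF bounded_linear_dual_frame_op] by blast
  show ?thesis
  proof (rule bounded_linear_intro[where K = K])
    fix x x'
    have "(\<lambda>n. blinfun_apply (ys n) (x + x') *\<^sub>R xs n) sums (frame_op x + frame_op x')"
      using sums_add[OF frame_op_sums frame_op_sums] by (simp add: blinfun.add_right scaleR_add_left)
    then show "frame_op (x + x') = frame_op x + frame_op x'"
      using frame_op_sums sums_unique2 by blast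
  next
    fix r :: real and x
    have "(\<lambda>n. blinfun_apply (ys n) (r *\<^sub>R x) *\<^sub>R xs n) sums (r *\<^sub>R frame_op x)"
      using sums_scaleR_right[OF frame_op_sums, of r] by (simp add: blinfun.scaleR_right)
    then show "frame_op (r *\<^sub>R x) = r *\<^sub>R frame_op x"
      using frame_op_sums sums_unique2 by blast
  next
    fix x
    obtain f :: "'a \<Rightarrow>\<^sub>L real" where f: "norm f \<le> 1" "blinfun_apply f (frame_op x) = norm (frame_op x)"
      using exists_norming_functional by blast
    have "norm (frame_op x) = blinfun_apply (dual_frame_op f) x" using f(2) frame_op_adjoint by simp
    also have "\<dots> \<le> norm (dual_frame_op f) * norm x" using norm_blinfun[of "dual_frame_op f" x] by simp
    also have "\<dots> \<le> K * norm x"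
      using K(2)[of f] f(1) K(1) by (intro mult_right_mono) (auto intro: order_trans mult_left_le_one_le)
    finally show "norm (frame_op x) \<le> norm x * K" by (simp add: mult.commute)
  qed
qed

lemma norm_le_frame_op:
  assumes W: "\<And>y. dual_frame_op (blinfun_apply W y) = y"
  shows "norm x \<le> norm W * norm (frame_op x)"
proof -
  obtain f :: "'a \<Rightarrow>\<^sub>L real" where f: "norm f \<le> 1" "blinfun_apply f x = norm x"
    using exists_norming_functional by blast
  have "norm x = blinfun_apply (blinfun_apply W f) (frame_op x)"
    using f(2) W[of f] by (simp add: frame_op_adjoint)
  also have "\<dots> \<le> norm (blinfun_apply W f) * norm (frame_op x)"
    using norm_blinfun[of "blinfun_apply W f" "frame_op x"] by simp
  also have "\<dots> \<le> norm W * norm (frame_op x)"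
  proof (rule mult_right_mono[OF _ norm_ge_zero])
    have "norm W * norm f \<le> norm W" using f(1) by (simp add: mult_left_le)
    then show "norm (blinfun_apply W f) \<le> norm W" using norm_blinfun[of W f] by linarith
  qed
  finally show ?thesis .
qed

lemma surj_frame_op:
  assumes W: "\<And>y. blinfun_apply W (dual_frame_op y) = y" "\<And>y. dual_frame_op (blinfun_apply W y) = y"
  shows "surj frame_op"
proof (rule surj_if_bounded_below_and_dense[OF bounded_linear_frame_op])
  show "norm W + 1 > 0" by (simp add: add_nonneg_pos)
  show "norm x \<le> (norm W + 1) * norm (frame_op x)" for x
    using norm_le_frame_op[OF W(2), of x] by (simp add: distrib_right add_increasing2)
  fix F :: "'a \<Rightarrow>\<^sub>L real"
  assume "\<And>x. blinfun_apply F (frame_op x) = 0"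
  then have "dual_frame_op F = 0" by (intro blinfun_eqI) (simp add: frame_op_adjoint[symmetric])
  then show "F = 0" using W(1)[of F] by (simp add: blinfun.zero_right)
qed

text \<open>The alternate dual frame is \<open>w\<^sub>n = W y\<^sub>n\<close> with \<open>W = V\<^sup>-\<^sup>1\<close>; since \<open>V\<close> is the
  adjoint of \<open>S = frame_op\<close>, we have \<open>w\<^sub>n(x) = y\<^sub>n(S\<^sup>-\<^sup>1 x)\<close>, which gives both the frame
  inequalities and the expansion of \<open>x\<close>.\<close>
lemma alt_dual_frame_if_dual_frame_op_invertible:
  assumes W: "\<And>y. blinfun_apply W (dual_frame_op y) = y" "\<And>y. dual_frame_op (blinfun_apply W y) = y"
  shows "alt_dual_frame D nd xs (\<lambda>n. blinfun_apply W (ys n))"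
    and "equiv_seq ys (\<lambda>n. blinfun_apply W (ys n))"
proof -
  define ws where "ws n = blinfun_apply W (ys n)" for n
  define T where "T = inv frame_op"
  have frame_op_T: "frame_op (T x) = x" for x
    unfolding T_def by (rule surj_f_inv_f[OF surj_frame_op[OF W]])
  have ws_apply: "blinfun_apply (ws n) x = blinfun_apply (ys n) (T x)" for n x
    using frame_op_adjoint[of "ws n" "T x"] W(2) by (simp add: ws_def frame_op_T)
  obtain K where K: "K > 0" "\<And>x. norm (frame_op x) \<le> norm x * K"
    using bounded_linear.pos_bounded[OF bounded_linear_frame_op] by blast
  have "frame D nd ws"
  proof (rule frame_if_coeffs_transform[OF frame ws_apply K(1) _ add_nonneg_pos[OF norm_ge_zero zero_less_one]])
    show "norm x \<le> K * norm (T x)" for x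
      using K(2)[of "T x"] by (simp add: frame_op_T mult.commute)
    show "norm (T x) \<le> (norm W + 1) * norm x" for x
      using norm_le_frame_op[OF W(2), of "T x"] by (simp add: frame_op_T distrib_right add_increasing2)
  qed
  moreover have "(\<lambda>n. blinfun_apply (ws n) x *\<^sub>R xs n) sums x" for x
    using frame_op_sums[of "T x"] by (simp add: ws_apply frame_op_T)
  moreover have "(\<lambda>n. blinfun_apply y (xs n) *\<^sub>R ws n) sums y" for y
    using bounded_linear.sums[OF blinfun.bounded_linear_right dual_frame_op_sums, of W y]
    by (simp add: ws_def W(1) blinfun.scaleR_right)
  ultimately show "alt_dual_frame D nd xs (\<lambda>n. blinfun_apply W (ys n))"
    unfolding alt_dual_frame_def cross_frame_def ws_def using coframe by blast
  show "equiv_seq ys (\<lambda>n. blinfun_apply W (ys n))"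
    unfolding equiv_seq_def
    by (intro exI[of _ W] exI[of _ "Blinfun dual_frame_op"])
       (simp add: bounded_linear_Blinfun_apply[OF bounded_linear_dual_frame_op] W)
qed

end

lemma dual_frame_op_invertible_if_equiv_alt_dual:
  fixes xs :: "nat \<Rightarrow> 'a::banach" and ys ws :: "nat \<Rightarrow> ('a \<Rightarrow>\<^sub>L real)"
  assumes alt: "alt_dual_frame D nd xs ws" and "equiv_seq ys ws"
  shows "\<exists>W :: ('a \<Rightarrow>\<^sub>L real) \<Rightarrow>\<^sub>L ('a \<Rightarrow>\<^sub>L real).
    \<forall>y. blinfun_apply W (\<Sum>n. blinfun_apply y (xs n) *\<^sub>R ys n) = y
      \<and> (\<Sum>n. blinfun_apply (blinfun_apply W y) (xs n) *\<^sub>R ys n) = y"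
proof -
  obtain T S :: "('a \<Rightarrow>\<^sub>L real) \<Rightarrow>\<^sub>L ('a \<Rightarrow>\<^sub>L real)"
    where TS: "\<And>y. blinfun_apply S (blinfun_apply T y) = y"
      "\<And>y. blinfun_apply T (blinfun_apply S y) = y"
      and T_ys: "\<And>n. blinfun_apply T (ys n) = ws n"
    using \<open>equiv_seq ys ws\<close> unfolding equiv_seq_def by blast
  have "(\<lambda>n. blinfun_apply y (xs n) *\<^sub>R ws n) sums y" for y
    using alt unfolding alt_dual_frame_def cross_frame_def by blast
  from bounded_linear.sums[OF blinfun.bounded_linear_right this, of S]
  have "(\<Sum>n. blinfun_apply y (xs n) *\<^sub>R ys n) = blinfun_apply S y" for y
    by (simp add: blinfun.scaleR_right T_ys[symmetric] TS sums_unique[symmetric])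
  then show ?thesis using TS by auto
qed

theorem theorem7:
  fixes D :: "(nat \<Rightarrow> real) set" and nd :: "(nat \<Rightarrow> real) \<Rightarrow> real"
    and xs :: "nat \<Rightarrow> 'a::banach" and ys :: "nat \<Rightarrow> ('a \<Rightarrow>\<^sub>L real)"
  assumes "seq_space D nd" and "seq_basis D nd" and "dual_basis D nd"
    and "coframe D nd xs" and "frame D nd ys"
  shows "(\<exists>ws. alt_dual_frame D nd xs ws \<and> equiv_seq ys ws) \<longleftrightarrow>
         (let V = (\<lambda>y::'a \<Rightarrow>\<^sub>L real. \<Sum>n. blinfun_apply y (xs n) *\<^sub>R ys n) in
            (\<exists>W :: ('a \<Rightarrow>\<^sub>L real) \<Rightarrow>\<^sub>L ('a \<Rightarrow>\<^sub>L real).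
               \<forall>y. blinfun_apply W (V y) = y \<and> V (blinfun_apply W y) = y))"
  unfolding Let_def
proof
  assume "\<exists>ws. alt_dual_frame D nd xs ws \<and> equiv_seq ys ws"
  then show "\<exists>W. \<forall>y. blinfun_apply W (\<Sum>n. blinfun_apply y (xs n) *\<^sub>R ys n) = y
      \<and> (\<Sum>n. blinfun_apply (blinfun_apply W y) (xs n) *\<^sub>R ys n) = y"
    using dual_frame_op_invertible_if_equiv_alt_dual by blast
next
  interpret coframe_frame D nd xs ys using assms by unfold_locales
  assume "\<exists>W. \<forall>y. blinfun_apply W (\<Sum>n. blinfun_apply y (xs n) *\<^sub>R ys n) = y
      \<and> (\<Sum>n. blinfun_apply (blinfun_apply W y) (xs n) *\<^sub>R ys n) = y"
  then show "\<exists>ws. alt_dual_frame D nd xs ws \<and> equiv_seq ys ws"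
    unfolding suminf_dual_frame_op using alt_dual_frame_if_dual_frame_op_invertible by blast
qed

end
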